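(* Let $\beta\in\{1,2\}$ and let $r\geq\beta$ be an integer. Let $x\in[0,1]^N$ and let $q=Q^{\Sigma\Delta,r}_{\mathcal{A}_\delta}(x)$ be its $r$-th order $\Sigma\Delta$ quantization, whose state vector $u$ satisfies $x-q=D^ru$ and $\|u\|_\infty\leq\delta/2$. Let $\hat x$ be a solution to $$\min_{z\in\mathbb{R}^N}\|(D^\beta)^Tz\|_1\quad\text{subject to}\quad \|D^{-r}(z-q)\|_\infty\leq\delta/2.$$ Then for every integer $1\leq s\leq N$, $$\|\hat x-x\|_2\leq C\Big(\sqrt{s}\,\delta+\sqrt{\sigma_s((D^\beta)^Tx)\,\delta}\Big),$$ where $C$ is a constant independent of $x$.
   Context: $D$ is the $N\times N$ matrix with $1$ on the diagonal, $-1$ on the subdiagonal, $0$ elsewhere. For $z\in\mathbb{R}^N$, $\sigma_s(z)=\min_{v\ s\text{-sparse}}\|v-z\|_1$ is the $\ell_1$ error of the best $s$-term approximation. The alphabet is $\mathcal{A}_\delta=\{c+J\delta: J\in\mathbb{Z},\ J_1\leq J\leq J_2\}$, and $Q_{\mathcal{A}}(z)$ is an element of $\mathcal{A}$ nearest to $z$. The $r$-th order $\Sigma\Delta$ quantization of $y\in\mathbb{R}^N$: with $u_i=0$ for $i\leq0$, set $q_i=Q_{\mathcal{A}}\big(\sum_{j=1}^r(-1)^{j-1}\binom{r}{j}u_{i-j}+y_i\big)$ and define $u_i$ by $(D^ru)_i=y_i-q_i$, $i=1,\dots,N$. The alphabet is assumed to have enough levels that $\|u\|_\infty\leq\delta/2$.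 *)

theory Defs
  imports Complex_Main "Jordan_Normal_Form.Matrix"
begin

text \<open>Vectors in R^N are Jordan_Normal_Form vectors of dimension N (indices 0..N-1),
  N x N matrices are elements of carrier_mat N N.\<close>

definition l1_norm :: "real vec \<Rightarrow> real" where
  "l1_norm v = (\<Sum>i<dim_vec v. \<bar>v $ i\<bar>)"

definition l2_norm :: "real vec \<Rightarrow> real" where
  "l2_norm v = sqrt (\<Sum>i<dim_vec v. (v $ i)^2)"

definition linf_norm :: "real vec \<Rightarrow> real" where
  "linf_norm v = Max (insert 0 {\<bar>v $ i\<bar> | i. i < dim_vec v})"

definition Dmat :: "nat \<Rightarrow> real mat" where
  "Dmat N = mat N N (\<lambda>(i,j). if i = j then 1 else if i = j + 1 then -1 else 0)"

definition mat_inv :: "nat \<Rightarrow> real mat \<Rightarrow> real mat" where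
  "mat_inv N A = (SOME B. B \<in> carrier_mat N N \<and> inverts_mat A B \<and> inverts_mat B A)"

definition sigma_s :: "nat \<Rightarrow> real vec \<Rightarrow> real" where
  "sigma_s s z = Inf {l1_norm (v - z) | v. v \<in> carrier_vec (dim_vec z)
                       \<and> card {i. i < dim_vec z \<and> v $ i \<noteq> 0} \<le> s}"

definition alphabet :: "real \<Rightarrow> real \<Rightarrow> int \<Rightarrow> int \<Rightarrow> real set" where
  "alphabet c \<delta> J1 J2 = {c + of_int J * \<delta> | J. J1 \<le> J \<and> J \<le> J2}"

definition nearest :: "real set \<Rightarrow> real \<Rightarrow> real \<Rightarrow> bool" where
  "nearest A z a \<longleftrightarrow> a \<in> A \<and> (\<forall>b\<in>A. \<bar>z - a\<bar> \<le> \<bar>z - b\<bar>)"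

text \<open>q is an r-th order Sigma-Delta quantization of y with state vector u
  (0-based indices; u_k = 0 for k < 0, i.e. terms with j > i vanish):
  q_i = Q_A(sum_{j=1}^r (-1)^(j-1) binom(r,j) u_{i-j} + y_i) and (D^r u)_i = y_i - q_i.\<close>
definition sigma_delta :: "nat \<Rightarrow> real set \<Rightarrow> real vec \<Rightarrow> real vec \<Rightarrow> real vec \<Rightarrow> bool" where
  "sigma_delta r A y q u \<longleftrightarrow>
     (let N = dim_vec y in
       q \<in> carrier_vec N \<and> u \<in> carrier_vec N \<and>
       (\<forall>i<N. nearest A
                 ((\<Sum>j\<in>{1..r}. if j \<le> i then (-1)^(j-1) * real (r choose j) * u $ (i - j) else 0) + y $ i)
                 (q $ i)) \<and>
       (\<forall>i<N. ((Dmat N ^\<^sub>m r) *\<^sub>v u) $ i = y $ i - q $ i))"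

definition tv_feasible :: "nat \<Rightarrow> real \<Rightarrow> real vec \<Rightarrow> real vec \<Rightarrow> bool" where
  "tv_feasible r \<delta> q z \<longleftrightarrow> (let N = dim_vec q in
     z \<in> carrier_vec N \<and> linf_norm (mat_inv N (Dmat N ^\<^sub>m r) *\<^sub>v (z - q)) \<le> \<delta> / 2)"

definition tv_solution :: "nat \<Rightarrow> nat \<Rightarrow> real \<Rightarrow> real vec \<Rightarrow> real vec \<Rightarrow> bool" where
  "tv_solution \<beta> r \<delta> q xhat \<longleftrightarrow> (let N = dim_vec q in
     tv_feasible r \<delta> q xhat \<and>
     (\<forall>z. tv_feasible r \<delta> q z \<longrightarrow>
        l1_norm (transpose_mat (Dmat N ^\<^sub>m \<beta>) *\<^sub>v xhat) \<le> l1_norm (transpose_mat (Dmat N ^\<^sub>m \<beta>) *\<^sub>v z)))"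

end

theory Submission
  imports Defs "Jordan_Normal_Form.Determinant" "HOL-Analysis.L2_Norm"
begin

(* As x and xhat are both feasible, h = xhat - x equals D^r w with
  |w_i| <= delta, i.e. h = D^beta a with |a_i| <= 2^(r-beta) delta. Writing g = (D^beta)^T h,
  this gives ||h||_2^2 = <a, g> <= 2^(r-beta) delta ||g||_1. Minimality of xhat says
  ||y + g||_1 <= ||y||_1 for y = (D^beta)^T x, which yields the cone condition
  ||g||_1 <= 2 ||g_T||_1 + 2 ||v - y||_1 for every s-sparse v with support T. Cauchy-Schwarz
  and ||g||_2 <= 2^beta ||h||_2 turn this into a quadratic inequality for ||h||_2 that is
  solved directly. *)

lemma Dmat_carrier [simp]: "Dmat N \<in> carrier_mat N N"
  by (simp add: Dmat_def)

lemma Dmat_dims [simp]: "dim_row (Dmat N) = N" "dim_col (Dmat N) = N"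
  by (simp_all add: Dmat_def)

lemma Dmat_pow_carrier [simp]: "Dmat N ^\<^sub>m k \<in> carrier_mat N N"
  by simp

lemma Dmat_index:
  "i < N \<Longrightarrow> j < N \<Longrightarrow> Dmat N $$ (i, j) = (if i = j then 1 else if i = j + 1 then -1 else 0)"
  by (simp add: Dmat_def)

lemma det_Dmat_pow: "det (Dmat N ^\<^sub>m k) = 1"
proof -
  have "det (Dmat N) = prod_list (diag_mat (Dmat N))"
    by (rule det_lower_triangular[of N]) (auto simp: Dmat_index)
  also have "diag_mat (Dmat N) = map (\<lambda>i. 1) [0..<N]"
    by (auto simp: diag_mat_def Dmat_index)
  finally have "det (Dmat N) = 1"
    by (simp add: map_replicate_const)
  then show ?thesis
    by (induct k) (auto simp: det_mult[of _ N] det_one)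
qed

lemma mat_inv_inverse:
  assumes A: "A \<in> carrier_mat N N" and "det A \<noteq> 0"
  shows "mat_inv N A \<in> carrier_mat N N \<and> mat_inv N A * A = 1\<^sub>m N \<and> A * mat_inv N A = 1\<^sub>m N"
proof -
  have "A \<in> Units (ring_mat TYPE(real) N ())"
    by (rule det_non_zero_imp_unit) (use assms in auto)
  then have "\<exists>B. B \<in> carrier_mat N N \<and> inverts_mat A B \<and> inverts_mat B A"
    using A by (auto simp: Units_def ring_mat_def inverts_mat_def)
  from someI_ex[OF this] show ?thesis
    using A unfolding mat_inv_def inverts_mat_def by auto
qed

lemma Dmat_pow_mult_mat_inv_mult_vec:
  assumes "v \<in> carrier_vec N"
  shows "Dmat N ^\<^sub>m k *\<^sub>v (mat_inv N (Dmat N ^\<^sub>m k) *\<^sub>v v) = v"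
  using mat_inv_inverse[of "Dmat N ^\<^sub>m k" N] assms
  by (simp add: det_Dmat_pow assoc_mult_mat_vec[symmetric, of _ N N _ N])

lemma mat_inv_mult_Dmat_pow_mult_vec:
  assumes "v \<in> carrier_vec N"
  shows "mat_inv N (Dmat N ^\<^sub>m k) *\<^sub>v (Dmat N ^\<^sub>m k *\<^sub>v v) = v"
  using mat_inv_inverse[of "Dmat N ^\<^sub>m k" N] assms
  by (simp add: det_Dmat_pow assoc_mult_mat_vec[symmetric, of _ N N _ N])

lemma pow_mat_add: "A \<in> carrier_mat n n \<Longrightarrow> A ^\<^sub>m (k + l) = A ^\<^sub>m k * A ^\<^sub>m l"
  by (induct l) (simp_all add: assoc_mult_mat[of _ n n _ n _ n])

lemma Dmat_mult_vec_index:
  assumes "v \<in> carrier_vec N" "i < N"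
  shows "(Dmat N *\<^sub>v v) $ i = v $ i - (if i = 0 then 0 else v $ (i - 1))"
proof -
  have "(Dmat N *\<^sub>v v) $ i = (\<Sum>j<N. Dmat N $$ (i, j) * v $ j)"
    using assms by (simp add: mult_mat_vec_def scalar_prod_def row_def atLeast0LessThan)
  also have "\<dots> = (\<Sum>j<N. (if j = i then v $ i else 0) - (if j = i - 1 \<and> i \<noteq> 0 then v $ j else 0))"
    by (rule sum.cong) (use assms in \<open>auto simp: Dmat_index\<close>)
  finally show ?thesis
    using assms by (simp add: sum_subtractf)
qed

lemma transpose_Dmat_mult_vec_index:
  assumes "v \<in> carrier_vec N" "i < N"
  shows "(transpose_mat (Dmat N) *\<^sub>v v) $ i = v $ i - (if i + 1 < N then v $ (i + 1) else 0)"
proof -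
  have "(transpose_mat (Dmat N) *\<^sub>v v) $ i = (\<Sum>j<N. Dmat N $$ (j, i) * v $ j)"
    using assms by (simp add: mult_mat_vec_def scalar_prod_def row_def atLeast0LessThan)
  also have "\<dots> = (\<Sum>j<N. (if j = i then v $ i else 0) - (if j = i + 1 then v $ j else 0))"
    by (rule sum.cong) (use assms in \<open>auto simp: Dmat_index\<close>)
  finally show ?thesis
    using assms by (simp add: sum_subtractf)
qed

lemma linf_norm_le_iff: "linf_norm v \<le> b \<longleftrightarrow> 0 \<le> b \<and> (\<forall>i<dim_vec v. \<bar>v $ i\<bar> \<le> b)"
proof -
  have "{\<bar>v $ i\<bar> | i. i < dim_vec v} = (\<lambda>i. \<bar>v $ i\<bar>) ` {..<dim_vec v}"
    by auto
  then show ?thesis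
    unfolding linf_norm_def by auto
qed

lemma abs_le_linf_norm: "i < dim_vec v \<Longrightarrow> \<bar>v $ i\<bar> \<le> linf_norm v"
  using linf_norm_le_iff[of v "linf_norm v"] by simp

lemma linf_norm_nonneg: "0 \<le> linf_norm v"
  using linf_norm_le_iff[of v "linf_norm v"] by simp

lemma linf_norm_diff_le:
  assumes "dim_vec a = dim_vec b"
  shows "linf_norm (a - b) \<le> linf_norm a + linf_norm b"
proof -
  have "\<bar>a $ i - b $ i\<bar> \<le> linf_norm a + linf_norm b" if "i < dim_vec b" for i
    using abs_triangle_ineq4[of "a $ i" "b $ i"] abs_le_linf_norm[of i a] abs_le_linf_norm[of i b]
      that assms by linarith
  then show ?thesis
    using assms by (simp add: linf_norm_le_iff linf_norm_nonneg add_nonneg_nonneg)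
qed

lemma linf_norm_Dmat_mult_vec_le:
  assumes v: "v \<in> carrier_vec N"
  shows "linf_norm (Dmat N *\<^sub>v v) \<le> 2 * linf_norm v"
proof -
  have bound: "\<bar>v $ j\<bar> \<le> linf_norm v" if "j < N" for j
    using abs_le_linf_norm[of j v] that v by simp
  have "\<bar>(Dmat N *\<^sub>v v) $ i\<bar> \<le> 2 * linf_norm v" if i: "i < N" for i
  proof -
    have "\<bar>v $ (i - 1)\<bar> \<le> linf_norm v"
      using bound i by simp
    then show ?thesis
      using abs_triangle_ineq4[of "v $ i" "v $ (i - 1)"] linf_norm_nonneg[of v] bound[OF i]
      by (auto simp: Dmat_mult_vec_index[OF v i])
  qed
  then show ?thesis
    by (simp add: linf_norm_le_iff linf_norm_nonneg)
qed

lemma linf_norm_Dmat_pow_mult_vec_le: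
  "v \<in> carrier_vec N \<Longrightarrow> linf_norm (Dmat N ^\<^sub>m k *\<^sub>v v) \<le> 2 ^ k * linf_norm v"
proof (induct k arbitrary: v)
  case 0
  then show ?case by simp
next
  case (Suc k)
  have "Dmat N ^\<^sub>m Suc k *\<^sub>v v = Dmat N ^\<^sub>m k *\<^sub>v (Dmat N *\<^sub>v v)"
    using Suc.prems by (simp add: assoc_mult_mat_vec[of _ N N _ N])
  also have "linf_norm \<dots> \<le> 2 ^ k * linf_norm (Dmat N *\<^sub>v v)"
    using Suc.hyps[OF mult_mat_vec_carrier[OF Dmat_carrier Suc.prems]] by simp
  also have "\<dots> \<le> 2 ^ k * (2 * linf_norm v)"
    using linf_norm_Dmat_mult_vec_le[OF Suc.prems] by simp
  finally show ?case
    by simp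
qed

lemma l1_norm_nonneg: "0 \<le> l1_norm v"
  by (simp add: l1_norm_def sum_nonneg)

lemma l2_norm_nonneg: "0 \<le> l2_norm v"
  by (simp add: l2_norm_def sum_nonneg)

lemma l2_norm_sq: "(l2_norm v)\<^sup>2 = (\<Sum>i<dim_vec v. (v $ i)\<^sup>2)"
  by (simp add: l2_norm_def sum_nonneg)

lemma l2_norm_transpose_Dmat_mult_vec_le:
  assumes v: "v \<in> carrier_vec N"
  shows "l2_norm (transpose_mat (Dmat N) *\<^sub>v v) \<le> 2 * l2_norm v"
proof (rule power2_le_imp_le)
  define next_sq where "next_sq i = (if i + 1 < N then (v $ (i + 1))\<^sup>2 else 0)" for i
  have "(\<Sum>i<N. next_sq i) \<le> (\<Sum>i<N. (v $ i)\<^sup>2)"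
  proof (cases N)
    case (Suc M)
    have "(\<Sum>i<N. next_sq i) = (\<Sum>i<M. (v $ Suc i)\<^sup>2)"
      unfolding Suc next_sq_def by (simp add: lessThan_Suc)
    also have "\<dots> \<le> (\<Sum>i<N. (v $ i)\<^sup>2)"
      unfolding Suc sum.lessThan_Suc_shift by simp
    finally show ?thesis .
  qed simp
  moreover have "((transpose_mat (Dmat N) *\<^sub>v v) $ i)\<^sup>2 \<le> 2 * (v $ i)\<^sup>2 + 2 * next_sq i"
    if "i < N" for i
  proof -
    have "(a - b)\<^sup>2 \<le> 2 * a\<^sup>2 + 2 * b\<^sup>2" for a b :: real
      using zero_le_power2[of "a + b"] unfolding power2_diff power2_sum by linarith
    then show ?thesis
      by (simp add: transpose_Dmat_mult_vec_index[OF v that] next_sq_def)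
  qed
  ultimately have "(\<Sum>i<N. ((transpose_mat (Dmat N) *\<^sub>v v) $ i)\<^sup>2) \<le> 4 * (\<Sum>i<N. (v $ i)\<^sup>2)"
    using sum_mono[of "{..<N}" "\<lambda>i. ((transpose_mat (Dmat N) *\<^sub>v v) $ i)\<^sup>2"
        "\<lambda>i. 2 * (v $ i)\<^sup>2 + 2 * next_sq i"]
    by (simp add: sum.distrib sum_distrib_left[symmetric])
  then show "(l2_norm (transpose_mat (Dmat N) *\<^sub>v v))\<^sup>2 \<le> (2 * l2_norm v)\<^sup>2"
    using v by (simp add: l2_norm_sq power_mult_distrib)
qed (simp add: l2_norm_nonneg)

lemma l2_norm_transpose_Dmat_pow_mult_vec_le:
  "v \<in> carrier_vec N \<Longrightarrow> l2_norm (transpose_mat (Dmat N ^\<^sub>m k) *\<^sub>v v) \<le> 2 ^ k * l2_norm v"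
proof (induct k)
  case 0
  then show ?case by simp
next
  case (Suc k)
  have "transpose_mat (Dmat N ^\<^sub>m Suc k) *\<^sub>v v
      = transpose_mat (Dmat N) *\<^sub>v (transpose_mat (Dmat N ^\<^sub>m k) *\<^sub>v v)"
    using Suc.prems by (simp add: transpose_mult[of _ N N _ N] assoc_mult_mat_vec[of _ N N _ N])
  also have "l2_norm \<dots> \<le> 2 * l2_norm (transpose_mat (Dmat N ^\<^sub>m k) *\<^sub>v v)"
    by (intro l2_norm_transpose_Dmat_mult_vec_le mult_mat_vec_carrier[of _ N N]) (use Suc.prems in auto)
  also have "\<dots> \<le> 2 * (2 ^ k * l2_norm v)"
    using Suc by simp
  finally show ?case
    by simp
qed

lemma l2_norm_sq_le_linf_mult_l1_transpose:
  fixes A :: "real mat"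
  assumes A: "A \<in> carrier_mat n m" and a: "a \<in> carrier_vec m"
  shows "(l2_norm (A *\<^sub>v a))\<^sup>2 \<le> linf_norm a * l1_norm (transpose_mat A *\<^sub>v (A *\<^sub>v a))"
proof -
  define h where "h = A *\<^sub>v a"
  define g where "g = transpose_mat A *\<^sub>v h"
  have h: "h \<in> carrier_vec n" and g: "g \<in> carrier_vec m"
    using A a by (simp_all add: h_def g_def)
  have "(l2_norm h)\<^sup>2 = h \<bullet> h"
    using h l2_norm_sq[of h] by (simp add: scalar_prod_def power2_eq_square atLeast0LessThan)
  also have "\<dots> = h \<bullet> (A *\<^sub>v a)"
    by (simp add: h_def)
  also have "\<dots> = g \<bullet> a"
    unfolding g_def by (rule transpose_vec_mult_scalar[OF A a h, symmetric])
  also have "\<dots> = (\<Sum>i<m. g $ i * a $ i)"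
    using a by (simp add: scalar_prod_def atLeast0LessThan)
  also have "\<dots> \<le> (\<Sum>i<m. \<bar>g $ i\<bar> * linf_norm a)"
  proof (rule sum_mono)
    fix i assume "i \<in> {..<m}"
    then have "\<bar>a $ i\<bar> \<le> linf_norm a"
      using a abs_le_linf_norm by simp
    then have "\<bar>g $ i\<bar> * \<bar>a $ i\<bar> \<le> \<bar>g $ i\<bar> * linf_norm a"
      by (rule mult_left_mono) simp
    then show "g $ i * a $ i \<le> \<bar>g $ i\<bar> * linf_norm a"
      using abs_ge_self[of "g $ i * a $ i"] by (simp add: abs_mult)
  qed
  also have "\<dots> = linf_norm a * l1_norm g"
    using g by (simp add: l1_norm_def sum_distrib_left mult.commute)
  finally show ?thesis
    unfolding g_def h_def .
qed

lemma abs_le_sparse_cone_term: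
  fixes g y v :: real
  shows "\<bar>g\<bar> \<le> 2 * (if v \<noteq> 0 then \<bar>g\<bar> else 0) + 2 * \<bar>v - y\<bar> + (\<bar>y + g\<bar> - \<bar>y\<bar>)"
  by (cases "v = 0") (simp_all add: abs_if)

lemma l1_norm_le_of_l1_descent:
  assumes y: "y \<in> carrier_vec N" and g: "g \<in> carrier_vec N" and v: "v \<in> carrier_vec N"
    and descent: "l1_norm (y + g) \<le> l1_norm y"
    and sparse: "card {i. i < N \<and> v $ i \<noteq> 0} \<le> s"
  shows "l1_norm g \<le> 2 * sqrt (real s) * l2_norm g + 2 * l1_norm (v - y)"
proof -
  define T where "T = {i. i < N \<and> v $ i \<noteq> 0}"
  have support: "(\<Sum>i<N. if v $ i \<noteq> 0 then \<bar>g $ i\<bar> else 0) = (\<Sum>i\<in>T. \<bar>g $ i\<bar>)"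
    unfolding T_def by (simp add: sum.inter_filter[symmetric])
  have "l1_norm g \<le> (\<Sum>i<N. 2 * (if v $ i \<noteq> 0 then \<bar>g $ i\<bar> else 0)
      + 2 * \<bar>v $ i - y $ i\<bar> + (\<bar>y $ i + g $ i\<bar> - \<bar>y $ i\<bar>))"
    using g by (simp add: l1_norm_def sum_mono abs_le_sparse_cone_term)
  also have "\<dots> = 2 * (\<Sum>i<N. if v $ i \<noteq> 0 then \<bar>g $ i\<bar> else 0) + 2 * l1_norm (v - y)
      + (l1_norm (y + g) - l1_norm y)"
    using y g v by (simp add: l1_norm_def sum.distrib sum_subtractf sum_distrib_left)
  finally have cone: "l1_norm g \<le> 2 * (\<Sum>i\<in>T. \<bar>g $ i\<bar>) + 2 * l1_norm (v - y)"
    using descent support by linarith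
  have "(\<Sum>i\<in>T. \<bar>g $ i\<bar>) \<le> sqrt (card T) * L2_set (($) g) T"
    using L2_set_mult_ineq[of "\<lambda>_. 1" "($) g" T] by (simp add: L2_set_constant)
  also have "\<dots> \<le> sqrt (real s) * l2_norm g"
  proof (rule mult_mono)
    show "L2_set (($) g) T \<le> l2_norm g"
      using g unfolding L2_set_def l2_norm_def T_def
      by (auto intro!: real_sqrt_le_mono sum_mono2)
  qed (use sparse in \<open>simp_all add: T_def l2_norm_nonneg\<close>)
  finally show ?thesis
    using cone by linarith
qed

lemma le_add_sqrt_of_sq_le:
  fixes H A P :: real
  assumes "0 \<le> A" "0 \<le> P" "H\<^sup>2 \<le> A * H + P"
  shows "H \<le> A + sqrt P"
proof (cases "H \<le> A")
  case False
  then have "(H - A)\<^sup>2 \<le> P"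
    using assms mult_left_mono[of A H A] by (simp add: power2_eq_square algebra_simps)
  then show ?thesis
    using real_sqrt_le_mono[of "(H - A)\<^sup>2" P] False by simp
qed (use real_sqrt_ge_zero[OF assms(2)] in linarith)

lemma le_sigma_s:
  assumes y: "y \<in> carrier_vec N"
    and le: "\<And>v. v \<in> carrier_vec N \<Longrightarrow> card {i. i < N \<and> v $ i \<noteq> 0} \<le> s \<Longrightarrow> c \<le> l1_norm (v - y)"
  shows "c \<le> sigma_s s y"
proof -
  have dim: "dim_vec y = N"
    using y by simp
  have no_support: "{i. i < N \<and> 0\<^sub>v N $ i \<noteq> (0::real)} = {}"
    by auto
  have "card {i. i < N \<and> 0\<^sub>v N $ i \<noteq> (0::real)} \<le> s"
    unfolding no_support by simp
  then have nonempty: "{l1_norm (v - y) |v. v \<in> carrier_vec N \<and> card {i. i < N \<and> v $ i \<noteq> 0} \<le> s} \<noteq> {}"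
    using zero_carrier_vec[of N] by blast
  show ?thesis
    unfolding sigma_s_def dim
    by (rule cInf_greatest[OF nonempty]) (blast intro: le)
qed

lemma sigma_delta_state:
  assumes "sigma_delta r A x q u"
  shows "q \<in> carrier_vec (dim_vec x)" and "u \<in> carrier_vec (dim_vec x)"
    and "Dmat (dim_vec x) ^\<^sub>m r *\<^sub>v u = x - q"
proof -
  show q: "q \<in> carrier_vec (dim_vec x)"
    using assms unfolding sigma_delta_def Let_def by (elim conjE)
  show "u \<in> carrier_vec (dim_vec x)"
    using assms unfolding sigma_delta_def Let_def by (elim conjE)
  have "\<forall>i<dim_vec x. (Dmat (dim_vec x) ^\<^sub>m r *\<^sub>v u) $ i = x $ i - q $ i"
    using assms unfolding sigma_delta_def Let_def by (elim conjE)
  then show "Dmat (dim_vec x) ^\<^sub>m r *\<^sub>v u = x - q"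
    using q by (intro eq_vecI) simp_all
qed

lemma sigma_delta_tv_feasible:
  assumes sd: "sigma_delta r A x q u" and u_bound: "linf_norm u \<le> \<delta> / 2"
  shows "tv_feasible r \<delta> q x"
proof -
  have dim_q: "dim_vec q = dim_vec x"
    using sigma_delta_state(1)[OF sd] by simp
  have "mat_inv (dim_vec x) (Dmat (dim_vec x) ^\<^sub>m r) *\<^sub>v (x - q) = u"
    using mat_inv_mult_Dmat_pow_mult_vec[OF sigma_delta_state(2)[OF sd], of r]
    by (simp add: sigma_delta_state(3)[OF sd])
  then show ?thesis
    using u_bound unfolding tv_feasible_def Let_def dim_q by (simp only: carrier_vec_def mem_Collect_eq)
qed

lemma tv_feasibleD:
  assumes "tv_feasible r \<delta> q z"
  shows "z \<in> carrier_vec (dim_vec q)"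
    and "linf_norm (mat_inv (dim_vec q) (Dmat (dim_vec q) ^\<^sub>m r) *\<^sub>v (z - q)) \<le> \<delta> / 2"
proof -
  show "z \<in> carrier_vec (dim_vec q)"
    using assms unfolding tv_feasible_def Let_def by (elim conjE)
  show "linf_norm (mat_inv (dim_vec q) (Dmat (dim_vec q) ^\<^sub>m r) *\<^sub>v (z - q)) \<le> \<delta> / 2"
    using assms unfolding tv_feasible_def Let_def by (elim conjE)
qed

lemma tv_feasible_diff:
  assumes z1: "tv_feasible r \<delta> q z1" and z2: "tv_feasible r \<delta> q z2" and N: "dim_vec q = N"
  obtains w where "w \<in> carrier_vec N" "Dmat N ^\<^sub>m r *\<^sub>v w = z1 - z2" "linf_norm w \<le> \<delta>"
proof -
  define B where "B = mat_inv N (Dmat N ^\<^sub>m r)"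
  have B: "B \<in> carrier_mat N N"
    using mat_inv_inverse[of "Dmat N ^\<^sub>m r" N] by (simp add: B_def det_Dmat_pow)
  have q: "q \<in> carrier_vec N"
    using N by (rule carrier_vecI)
  have z: "z1 \<in> carrier_vec N" "z2 \<in> carrier_vec N"
    using tv_feasibleD(1)[OF z1] tv_feasibleD(1)[OF z2] N by simp_all
  define w where "w = B *\<^sub>v (z1 - q) - B *\<^sub>v (z2 - q)"
  have Bz: "B *\<^sub>v (z1 - q) \<in> carrier_vec N" "B *\<^sub>v (z2 - q) \<in> carrier_vec N"
    using mult_mat_vec_carrier[OF B] z q by simp_all
  then have w: "w \<in> carrier_vec N"
    by (simp add: w_def)
  have "Dmat N ^\<^sub>m r *\<^sub>v w = Dmat N ^\<^sub>m r *\<^sub>v (B *\<^sub>v (z1 - q)) - Dmat N ^\<^sub>m r *\<^sub>v (B *\<^sub>v (z2 - q))"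
    unfolding w_def by (rule mult_minus_distrib_mat_vec[OF Dmat_pow_carrier Bz])
  also have "\<dots> = (z1 - q) - (z2 - q)"
    using z q by (simp add: B_def Dmat_pow_mult_mat_inv_mult_vec)
  also have "\<dots> = z1 - z2"
    using z q by (intro eq_vecI) simp_all
  finally have "Dmat N ^\<^sub>m r *\<^sub>v w = z1 - z2" .
  moreover have "linf_norm w \<le> \<delta>"
    using linf_norm_diff_le[of "B *\<^sub>v (z1 - q)" "B *\<^sub>v (z2 - q)"] B
      tv_feasibleD(2)[OF z1] tv_feasibleD(2)[OF z2] N by (simp add: w_def B_def)
  ultimately show thesis
    using that w by blast
qed

lemma tv_feasible_diff_energy_le:
  assumes "\<beta> \<le> r" "tv_feasible r \<delta> q z1" "tv_feasible r \<delta> q z2" "dim_vec q = N"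
  shows "(l2_norm (z1 - z2))\<^sup>2
    \<le> 2 ^ (r - \<beta>) * \<delta> * l1_norm (transpose_mat (Dmat N ^\<^sub>m \<beta>) *\<^sub>v (z1 - z2))"
proof -
  obtain w where w: "w \<in> carrier_vec N" "Dmat N ^\<^sub>m r *\<^sub>v w = z1 - z2" "linf_norm w \<le> \<delta>"
    using tv_feasible_diff[OF assms(2-4)] by blast
  define a where "a = Dmat N ^\<^sub>m (r - \<beta>) *\<^sub>v w"
  have a: "a \<in> carrier_vec N"
    using w by (simp add: a_def mult_mat_vec_carrier[OF Dmat_pow_carrier])
  have "linf_norm a \<le> 2 ^ (r - \<beta>) * linf_norm w"
    unfolding a_def by (rule linf_norm_Dmat_pow_mult_vec_le[OF w(1)])
  also have "\<dots> \<le> 2 ^ (r - \<beta>) * \<delta>"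
    using w(3) by (rule mult_left_mono) simp
  finally have a_bound: "linf_norm a \<le> 2 ^ (r - \<beta>) * \<delta>" .
  have "Dmat N ^\<^sub>m r = Dmat N ^\<^sub>m \<beta> * Dmat N ^\<^sub>m (r - \<beta>)"
    using pow_mat_add[of "Dmat N" N \<beta> "r - \<beta>"] assms(1) by simp
  then have "z1 - z2 = Dmat N ^\<^sub>m \<beta> *\<^sub>v a"
    using w by (simp add: a_def assoc_mult_mat_vec[of _ N N _ N])
  then have "(l2_norm (z1 - z2))\<^sup>2
      \<le> linf_norm a * l1_norm (transpose_mat (Dmat N ^\<^sub>m \<beta>) *\<^sub>v (z1 - z2))"
    using l2_norm_sq_le_linf_mult_l1_transpose[OF Dmat_pow_carrier a] by simp
  also have "\<dots> \<le> 2 ^ (r - \<beta>) * \<delta> * l1_norm (transpose_mat (Dmat N ^\<^sub>m \<beta>) *\<^sub>v (z1 - z2))"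
    by (rule mult_right_mono[OF a_bound l1_norm_nonneg])
  finally show ?thesis .
qed

lemma tv_solutionD:
  assumes "tv_solution \<beta> r \<delta> q xhat"
  shows "tv_feasible r \<delta> q xhat"
    and "tv_feasible r \<delta> q z \<Longrightarrow> l1_norm (transpose_mat (Dmat (dim_vec q) ^\<^sub>m \<beta>) *\<^sub>v xhat)
      \<le> l1_norm (transpose_mat (Dmat (dim_vec q) ^\<^sub>m \<beta>) *\<^sub>v z)"
proof -
  show "tv_feasible r \<delta> q xhat"
    using assms unfolding tv_solution_def Let_def by (elim conjE)
  show "l1_norm (transpose_mat (Dmat (dim_vec q) ^\<^sub>m \<beta>) *\<^sub>v xhat)
      \<le> l1_norm (transpose_mat (Dmat (dim_vec q) ^\<^sub>m \<beta>) *\<^sub>v z)" if "tv_feasible r \<delta> q z"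
    using assms that unfolding tv_solution_def Let_def by blast
qed

lemma tv_solution_l1_descent:
  assumes xhat: "tv_solution \<beta> r \<delta> q xhat" and x: "tv_feasible r \<delta> q x" and N: "dim_vec q = N"
  defines "M \<equiv> transpose_mat (Dmat N ^\<^sub>m \<beta>)"
  shows "l1_norm (M *\<^sub>v x + M *\<^sub>v (xhat - x)) \<le> l1_norm (M *\<^sub>v x)"
proof -
  have carrier: "x \<in> carrier_vec N" "xhat \<in> carrier_vec N"
    using tv_feasibleD(1)[OF x] tv_feasibleD(1)[OF tv_solutionD(1)[OF xhat]] N by simp_all
  have M: "M \<in> carrier_mat N N"
    by (simp add: M_def)
  have "M *\<^sub>v x + M *\<^sub>v (xhat - x) = M *\<^sub>v (x + (xhat - x))"
    using mult_add_distrib_mat_vec[OF M, of x "xhat - x"] carrier by simp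
  also have "x + (xhat - x) = xhat"
    using carrier by (intro eq_vecI) simp_all
  finally show ?thesis
    using tv_solutionD(2)[OF xhat x] N by (simp add: M_def)
qed

lemma tv_solution_error_sq_le:
  assumes "\<beta> \<le> r" "0 < \<delta>" "dim_vec q = N"
    and x: "tv_feasible r \<delta> q x" and xhat: "tv_solution \<beta> r \<delta> q xhat"
  defines "H \<equiv> l2_norm (xhat - x)" and "y \<equiv> transpose_mat (Dmat N ^\<^sub>m \<beta>) *\<^sub>v x"
  shows "H\<^sup>2 \<le> 2 ^ (r + 1) * sqrt (real s) * \<delta> * H + 2 ^ (r - \<beta> + 1) * \<delta> * sigma_s s y"
proof -
  define M where "M = transpose_mat (Dmat N ^\<^sub>m \<beta>)"
  define g where "g = M *\<^sub>v (xhat - x)"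
  define K where "K = 2 ^ (r - \<beta>) * \<delta>"
  have K: "0 < K"
    using assms(2) by (simp add: K_def)
  have feasible: "tv_feasible r \<delta> q xhat"
    by (rule tv_solutionD(1)[OF xhat])
  have carrier: "x \<in> carrier_vec N" "xhat \<in> carrier_vec N"
    using tv_feasibleD(1)[OF x] tv_feasibleD(1)[OF feasible] assms(3) by simp_all
  have M: "M \<in> carrier_mat N N"
    by (simp add: M_def)
  have y: "y \<in> carrier_vec N" and g: "g \<in> carrier_vec N"
    using mult_mat_vec_carrier[OF M] carrier by (simp_all add: y_def g_def M_def)
  have descent: "l1_norm (y + g) \<le> l1_norm y"
    using tv_solution_l1_descent[OF xhat x assms(3)] by (simp add: y_def g_def M_def)
  have energy: "H\<^sup>2 \<le> K * l1_norm g"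
    using tv_feasible_diff_energy_le[OF assms(1) feasible x assms(3)] by (simp add: H_def K_def g_def M_def)
  have g_l2: "l2_norm g \<le> 2 ^ \<beta> * H"
    using l2_norm_transpose_Dmat_pow_mult_vec_le[of "xhat - x" N \<beta>] carrier by (simp add: H_def g_def M_def)
  have scale: "K * (2 * sqrt (real s) * 2 ^ \<beta>) = 2 ^ (r + 1) * sqrt (real s) * \<delta>"
    using assms(1) by (simp add: K_def power_add[symmetric])
  have "H\<^sup>2 - 2 ^ (r + 1) * sqrt (real s) * \<delta> * H \<le> 2 * K * l1_norm (v - y)"
    if "v \<in> carrier_vec N" "card {i. i < N \<and> v $ i \<noteq> 0} \<le> s" for v
  proof -
    have "l1_norm g \<le> 2 * sqrt (real s) * (2 ^ \<beta> * H) + 2 * l1_norm (v - y)"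
      using l1_norm_le_of_l1_descent[OF y g that(1) descent that(2)] g_l2
        mult_left_mono[OF g_l2, of "2 * sqrt (real s)"] by simp
    then have "K * l1_norm g \<le> K * (2 * sqrt (real s) * (2 ^ \<beta> * H) + 2 * l1_norm (v - y))"
      using K by simp
    also have "\<dots> = K * (2 * sqrt (real s) * 2 ^ \<beta>) * H + 2 * K * l1_norm (v - y)"
      by (simp add: algebra_simps)
    also have "\<dots> = 2 ^ (r + 1) * sqrt (real s) * \<delta> * H + 2 * K * l1_norm (v - y)"
      unfolding scale ..
    finally show ?thesis
      using energy by linarith
  qed
  then have "(H\<^sup>2 - 2 ^ (r + 1) * sqrt (real s) * \<delta> * H) / (2 * K) \<le> sigma_s s y"
    using K by (intro le_sigma_s[OF y]) (simp add: pos_divide_le_eq mult.commute)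
  then show ?thesis
    using K by (simp add: pos_divide_le_eq K_def algebra_simps)
qed

lemma tv_solution_error_bound:
  assumes "\<beta> \<le> r" "0 < \<delta>" "dim_vec q = N"
    and x: "tv_feasible r \<delta> q x" and xhat: "tv_solution \<beta> r \<delta> q xhat"
  shows "l2_norm (xhat - x)
    \<le> 2 ^ (r + 1) * (sqrt (real s) * \<delta> + sqrt (sigma_s s (transpose_mat (Dmat N ^\<^sub>m \<beta>) *\<^sub>v x) * \<delta>))"
proof -
  define \<sigma> where "\<sigma> = sigma_s s (transpose_mat (Dmat N ^\<^sub>m \<beta>) *\<^sub>v x)"
  have x_carrier: "x \<in> carrier_vec N"
    using tv_feasibleD(1)[OF x] assms(3) by simp
  have "transpose_mat (Dmat N ^\<^sub>m \<beta>) \<in> carrier_mat N N"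
    by simp
  then have \<sigma>: "0 \<le> \<sigma>"
    unfolding \<sigma>_def
    by (rule le_sigma_s[OF mult_mat_vec_carrier[OF _ x_carrier]]) (simp add: l1_norm_nonneg)
  have "l2_norm (xhat - x)
      \<le> 2 ^ (r + 1) * sqrt (real s) * \<delta> + sqrt (2 ^ (r - \<beta> + 1) * \<delta> * \<sigma>)"
    using tv_solution_error_sq_le[OF assms] assms(2) \<sigma> unfolding \<sigma>_def
    by (intro le_add_sqrt_of_sq_le) simp_all
  also have "sqrt (2 ^ (r - \<beta> + 1) * \<delta> * \<sigma>) \<le> sqrt ((2 ^ (r + 1))\<^sup>2 * (\<sigma> * \<delta>))"
  proof (rule real_sqrt_le_mono)
    have pow_le: "(2::real) ^ (r - \<beta> + 1) \<le> (2 ^ (r + 1))\<^sup>2"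
      unfolding power_mult[symmetric] by (rule power_increasing) simp_all
    show "2 ^ (r - \<beta> + 1) * \<delta> * \<sigma> \<le> (2 ^ (r + 1))\<^sup>2 * (\<sigma> * \<delta>)"
      using mult_right_mono[OF pow_le, of "\<sigma> * \<delta>"] assms(2) \<sigma> by (simp add: mult_ac)
  qed
  also have "\<dots> = 2 ^ (r + 1) * sqrt (\<sigma> * \<delta>)"
    by (simp add: real_sqrt_mult)
  finally show ?thesis
    unfolding \<sigma>_def by (simp add: algebra_simps)
qed

theorem theorem2:
  fixes \<beta> r :: nat
  assumes "\<beta> \<in> {1, 2}" and "\<beta> \<le> r"
  shows "\<exists>C :: real. \<forall>(N::nat) (\<delta>::real) (c::real) (J1::int) (J2::int) x q u xhat (s::nat).
           \<delta> > 0 \<longrightarrow> J1 \<le> J2 \<longrightarrow>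
           x \<in> carrier_vec N \<longrightarrow> (\<forall>i<N. 0 \<le> x $ i \<and> x $ i \<le> 1) \<longrightarrow>
           sigma_delta r (alphabet c \<delta> J1 J2) x q u \<longrightarrow>
           linf_norm u \<le> \<delta> / 2 \<longrightarrow>
           tv_solution \<beta> r \<delta> q xhat \<longrightarrow>
           1 \<le> s \<longrightarrow> s \<le> N \<longrightarrow>
           l2_norm (xhat - x) \<le>
             C * (sqrt (real s) * \<delta> + sqrt (sigma_s s (transpose_mat (Dmat N ^\<^sub>m \<beta>) *\<^sub>v x) * \<delta>))"
proof (intro exI allI impI)
  fix N :: nat and \<delta> c :: real and J1 J2 :: int and x q u xhat :: "real vec" and s :: nat
  assume "\<delta> > 0" and "x \<in> carrier_vec N" and sd: "sigma_delta r (alphabet c \<delta> J1 J2) x q u"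
    and "linf_norm u \<le> \<delta> / 2" and "tv_solution \<beta> r \<delta> q xhat"
  moreover have "dim_vec q = N"
    using sigma_delta_state(1)[OF sd] \<open>x \<in> carrier_vec N\<close> by simp
  ultimately show "l2_norm (xhat - x)
      \<le> 2 ^ (r + 1) * (sqrt (real s) * \<delta> + sqrt (sigma_s s (transpose_mat (Dmat N ^\<^sub>m \<beta>) *\<^sub>v x) * \<delta>))"
    using assms(2) by (intro tv_solution_error_bound sigma_delta_tv_feasible)
qed

end
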